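(* Let $\mathcal M\subset\mathbb R^3$ be the surface of revolution described in the context, and suppose $\mathcal M$ is symmetric about the $X$-$Y$ plane. Then for every integer $n\ge 1$ there exists a rotating $2n$-vortex solution (in the sense of the context) of the generalized point-vortex system $$d_i\,\dot{\mathbf p}_i=\frac{r_i^2}{\alpha_i^2}\left[(1-\alpha_i')\frac{\mathbf p_i^{\perp}}{r_i^2}+2\sum_{j\neq i}d_id_j\frac{(\mathbf p_i-\mathbf p_j)^{\perp}}{|\mathbf p_i-\mathbf p_j|^2}\right],\qquad i=1,\dots,2n,$$ whose orbits $C_\pm\subset\mathcal M$ (the images under $\mathbf P$ of the circles traced by the degree $+1$ and degree $-1$ vortices) are symmetric to each other about the $X$-$Y$ plane.
   Context: $\mathcal M$ is obtained by rotating about the $Z$-axis a regular curve $\gamma(s)=(\alpha(s),0,\beta(s))$, $0\le s\le l$, parametrized by arc length ($|\gamma'|=1$), with $\alpha(s)>0$ for $s\ne 0,l$ and $\alpha(0)=\alpha(l)=\beta'(0)=\beta'(l)=0$, so that $\mathcal M$ is a smooth simply connected compact surface without boundary. Let $S:[0,\pi]\to[0,l]$ solve $S'(\phi)\sin\phi=\alpha(S(\phi))$ with $S(0)=0$, $S(\pi)=l$. Define $\mathbf P:\mathbb R^2\cup\{\infty\}\to\mathcal M$ by $\mathbf P(x,y)=(\alpha(S(\phi))\cos\theta,\alpha(S(\phi))\sin\theta,\beta(S(\phi)))$, where $\theta$ is the polar angle of $(x,y)$ and $\cos\phi=\frac{1-r^2}{1+r^2}$, $r^2=x^2+y^2$ (inverse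 stereographic projection followed by a conformal map $\mathcal S^2\to\mathcal M$). For a planar point $\mathbf p_i$ with $r_i=|\mathbf p_i|$, write $\alpha_i=\alpha(S(\phi(\mathbf p_i)))$ and $\alpha_i'=\alpha'(S(\phi(\mathbf p_i)))$; $\mathbf v^\perp$ denotes the rotation of $\mathbf v\in\mathbb R^2$ by $\pi/2$. A rotating $2n$-vortex solution is a solution with degrees $d_i=1$ for $1\le i\le n$ and $d_i=-1$ for $n+1\le i\le 2n$, of the form $\mathbf p_i=r_1(\cos(\Theta_i+\omega_0t),\sin(\Theta_i+\omega_0t))$ for $1\le i\le n$ and $\mathbf p_{i}=r_2(\cos(\Theta_{i-n}+\omega_0t),\sin(\Theta_{i-n}+\omega_0t))$ for $n+1\le i\le 2n$, where $\Theta_i=\frac{2\pi}{n}(i-1)$ and $r_1,r_2,\omega_0$ are constants. *)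

theory Defs
  imports "HOL-Analysis.Analysis"
begin

text \<open>Planar points are represented as complex numbers (R^2 = C); the rotation by pi/2
  of a vector v is then i * v.\<close>

definition surfM :: "(real \<Rightarrow> real) \<Rightarrow> (real \<Rightarrow> real) \<Rightarrow> real \<Rightarrow> (real \<times> real \<times> real) set" where
  "surfM \<alpha> \<beta> l = {(\<alpha> s * cos \<theta>, \<alpha> s * sin \<theta>, \<beta> s) | s \<theta>. s \<in> {0..l}}"

definition reflXY :: "real \<times> real \<times> real \<Rightarrow> real \<times> real \<times> real" where
  "reflXY = (\<lambda>(x, y, z). (x, y, - z))"

definition sph_angle :: "complex \<Rightarrow> real" where
  "sph_angle p = arccos ((1 - (cmod p)\<^sup>2) / (1 + (cmod p)\<^sup>2))"

definition Pmap :: "(real \<Rightarrow> real) \<Rightarrow> (real \<Rightarrow> real) \<Rightarrow> (real \<Rightarrow> real) \<Rightarrow> complex \<Rightarrow> real \<times> real \<times> real" where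
  "Pmap \<alpha> \<beta> S p = (\<alpha> (S (sph_angle p)) * cos (Arg p), \<alpha> (S (sph_angle p)) * sin (Arg p),
                      \<beta> (S (sph_angle p)))"

definition perp :: "complex \<Rightarrow> complex" where
  "perp v = \<i> * v"

definition deg :: "nat \<Rightarrow> nat \<Rightarrow> real" where
  "deg n i = (if i \<le> n then 1 else -1)"

text \<open>Right-hand side of the generalized point-vortex system for vortex i, given
  the configuration q (positions of vortices 1..N), degrees d, and alpha' = da.\<close>
definition pv_rhs :: "(real \<Rightarrow> real) \<Rightarrow> (real \<Rightarrow> real) \<Rightarrow> (real \<Rightarrow> real) \<Rightarrow> nat \<Rightarrow>
    (nat \<Rightarrow> real) \<Rightarrow> (nat \<Rightarrow> complex) \<Rightarrow> nat \<Rightarrow> complex" where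
  "pv_rhs \<alpha> da S N d q i =
     of_real ((cmod (q i))\<^sup>2 / (\<alpha> (S (sph_angle (q i))))\<^sup>2) *
     (of_real (1 - da (S (sph_angle (q i)))) * perp (q i) / of_real ((cmod (q i))\<^sup>2)
      + 2 * (\<Sum>j\<in>{1..N} - {i}. of_real (d i * d j) * perp (q i - q j) / of_real ((cmod (q i - q j))\<^sup>2)))"

definition is_pv_solution :: "(real \<Rightarrow> real) \<Rightarrow> (real \<Rightarrow> real) \<Rightarrow> (real \<Rightarrow> real) \<Rightarrow> nat \<Rightarrow>
    (nat \<Rightarrow> real) \<Rightarrow> (nat \<Rightarrow> real \<Rightarrow> complex) \<Rightarrow> bool" where
  "is_pv_solution \<alpha> da S N d p \<longleftrightarrow>
     (\<forall>t. \<forall>i\<in>{1..N}. \<exists>v. (p i has_vector_derivative v) (at t) \<and>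
          of_real (d i) * v = pv_rhs \<alpha> da S N d (\<lambda>j. p j t) i)"

definition rot_config :: "nat \<Rightarrow> real \<Rightarrow> real \<Rightarrow> real \<Rightarrow> nat \<Rightarrow> real \<Rightarrow> complex" where
  "rot_config n r1 r2 \<omega>0 i t =
     (if i \<le> n then of_real r1 * cis (2 * pi / real n * (real i - 1) + \<omega>0 * t)
      else of_real r2 * cis (2 * pi / real n * (real (i - n) - 1) + \<omega>0 * t))"

end

theory Submission
  imports Defs
begin

(*
  Near the poles s = 0 and s = l the profile is a graph over the distance alpha to the axis,
  and the reflection in the X-Y plane exchanges these two polar branches. Differentiating
  beta (mirror x) = - beta x and using unit speed gives points u, v with alpha v = alpha u,
  beta v = - beta u and alpha' v = - alpha' u.

  Place the n positive vortices as a regular n-gon on the circle of radius r1 that P maps to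
  the parallel through u, and the n negative ones on the circle of radius r2 mapped to the
  parallel through v. The force on a vortex from a concentric regular n-gon of radius ratio rho
  is governed by X rho = sum_k 1 / (1 - rho w^k), w = exp (2 pi i / n), which is real and
  satisfies X 1 = (n - 1) / 2 and X rho + X (1 / rho) = n. Together with alpha' v = - alpha' u
  this makes both rings rotate rigidly with one and the same angular velocity.
*)

lemma strict_mono_on_if_deriv_pos:
  fixes f f' :: "real \<Rightarrow> real"
  assumes deriv: "\<And>s. s \<in> {a..b} \<Longrightarrow> (f has_real_derivative f' s) (at s within {a..b})"
    and pos: "\<And>s. s \<in> {a..b} \<Longrightarrow> 0 < f' s"
  shows "strict_mono_on {a..b} f"
proof (rule strict_mono_onI)
  fix x y assume xy: "x \<in> {a..b}" "y \<in> {a..b}" "x < y"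
  show "f x < f y"
  proof (rule DERIV_pos_imp_increasing_open[OF \<open>x < y\<close>])
    fix s assume "x < s" "s < y"
    with xy show "\<exists>D. (f has_real_derivative D) (at s) \<and> 0 < D"
      using deriv[of s] pos[of s] by (auto simp: at_within_Icc_at)
  next
    have "continuous_on {a..b} f" using deriv by (rule DERIV_continuous_on)
    then show "continuous_on {x..y} f" by (rule continuous_on_subset) (use xy in auto)
  qed
qed

lemma has_real_derivative_the_inv_into:
  fixes f :: "real \<Rightarrow> real"
  assumes cont: "continuous_on {a..b} f" and inj: "inj_on f {a..b}"
    and range: "{c<..<d} \<subseteq> f ` {a..b}" and y: "c < y" "y < d"
    and deriv: "(f has_real_derivative D) (at (the_inv_into {a..b} f y))" and "D \<noteq> 0"
  shows "(the_inv_into {a..b} f has_real_derivative inverse D) (at y)"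
proof (rule DERIV_inverse_function[where g = \<open>the_inv_into {a..b} f\<close>, OF deriv \<open>D \<noteq> 0\<close> y])
  show "f (the_inv_into {a..b} f z) = z" if "c < z" "z < d" for z
    using that range by (intro f_the_inv_into_f[OF inj]) auto
  have "continuous_on (f ` {a..b}) (the_inv_into {a..b} f)"
    using cont by (rule continuous_on_inv) (auto simp: the_inv_into_f_f[OF inj])
  then have "continuous_on {c<..<d} (the_inv_into {a..b} f)"
    using range by (rule continuous_on_subset)
  then show "isCont (the_inv_into {a..b} f) y"
    using y by (simp add: continuous_on_eq_continuous_at)
qed

lemma negation_closed_pair:
  assumes "\<And>s. s \<in> {x, y} \<Longrightarrow> \<exists>t\<in>{x, y}. \<beta> t = - \<beta> s"
  shows "\<beta> y = - (\<beta> x :: real)"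
  using assms[of x] assms[of y] by auto

lemma opposite_slopes:
  fixes a b c d :: real
  assumes "0 < a" "c < 0" "a\<^sup>2 + b\<^sup>2 = 1" "c\<^sup>2 + d\<^sup>2 = 1" "d * a = - b * c"
  shows "c = - a"
proof -
  have "d\<^sup>2 * a\<^sup>2 = b\<^sup>2 * c\<^sup>2" using arg_cong[OF assms(5), of power2] by (simp add: power_mult_distrib)
  moreover have "d\<^sup>2 = 1 - c\<^sup>2" "b\<^sup>2 = 1 - a\<^sup>2" using assms(3,4) by linarith+
  ultimately have "(1 - c\<^sup>2) * a\<^sup>2 = (1 - a\<^sup>2) * c\<^sup>2" by simp
  then have "(- c)\<^sup>2 = a\<^sup>2" by (simp add: algebra_simps)
  then show ?thesis using assms(1,2) by (subst (asm) power2_eq_iff_nonneg) auto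
qed

lemma IVT_interior:
  fixes f :: "real \<Rightarrow> real"
  assumes "a \<le> b" "continuous_on {a..b} f" "f a < y" "y < f b"
  obtains x where "a < x" "x < b" "f x = y"
proof -
  obtain x where "a \<le> x" "x \<le> b" "f x = y" using IVT'[of f a y b] assms by fastforce
  moreover have "x \<noteq> a" "x \<noteq> b" using assms \<open>f x = y\<close> by auto
  ultimately show thesis by (intro that[of x]) auto
qed

section \<open>A profile curve symmetric under reflection\<close>

locale mirror_symmetric_profile =
  fixes l :: real and \<alpha> \<beta> \<alpha>' \<beta>' :: "real \<Rightarrow> real"
  assumes l_pos: "0 < l"
    and \<alpha>_deriv: "\<And>s. s \<in> {0..l} \<Longrightarrow> (\<alpha> has_real_derivative \<alpha>' s) (at s within {0..l})"
    and \<beta>_deriv: "\<And>s. s \<in> {0..l} \<Longrightarrow> (\<beta> has_real_derivative \<beta>' s) (at s within {0..l})"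
    and \<alpha>'_cont: "continuous_on {0..l} \<alpha>'"
    and unit_speed: "\<And>s. s \<in> {0..l} \<Longrightarrow> (\<alpha>' s)\<^sup>2 + (\<beta>' s)\<^sup>2 = 1"
    and \<alpha>_pos: "\<And>s. s \<in> {0<..<l} \<Longrightarrow> 0 < \<alpha> s"
    and \<alpha>_ends: "\<alpha> 0 = 0" "\<alpha> l = 0"
    and \<beta>'_ends: "\<beta>' 0 = 0" "\<beta>' l = 0"
    and reflection: "\<And>s. s \<in> {0..l} \<Longrightarrow> \<exists>t\<in>{0..l}. \<alpha> t = \<alpha> s \<and> \<beta> t = - \<beta> s"
begin

lemma \<alpha>_nonneg: "s \<in> {0..l} \<Longrightarrow> 0 \<le> \<alpha> s"
  using \<alpha>_pos[of s] \<alpha>_ends by (cases "s = 0 \<or> s = l") auto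

lemma \<alpha>_cont: "continuous_on {0..l} \<alpha>"
  using \<alpha>_deriv by (rule DERIV_continuous_on)

lemma \<alpha>'_start: "\<alpha>' 0 = 1"
proof (rule ccontr)
  assume "\<alpha>' 0 \<noteq> 1"
  moreover have "(\<alpha>' 0)\<^sup>2 = 1" using unit_speed[of 0] \<beta>'_ends l_pos by simp
  ultimately have "\<alpha>' 0 < 0" by (auto simp: power2_eq_1_iff)
  then obtain d where "d > 0" and dec: "\<And>h. 0 < h \<Longrightarrow> h \<in> {0..l} \<Longrightarrow> h < d \<Longrightarrow> \<alpha> h < \<alpha> 0"
    using has_real_derivative_neg_dec_right[OF \<alpha>_deriv[of 0]] l_pos by force
  then have "\<alpha> (min (d/2) l) < 0" using l_pos \<alpha>_ends by (intro dec[THEN order.strict_trans2]) auto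
  then show False using \<alpha>_nonneg[of "min (d/2) l"] \<open>d > 0\<close> l_pos by auto
qed

lemma \<alpha>'_end: "\<alpha>' l = -1"
proof (rule ccontr)
  assume "\<alpha>' l \<noteq> -1"
  moreover have "(\<alpha>' l)\<^sup>2 = 1" using unit_speed[of l] \<beta>'_ends l_pos by simp
  ultimately have "0 < \<alpha>' l" by (auto simp: power2_eq_1_iff)
  then obtain d where "d > 0" and inc: "\<And>h. 0 < h \<Longrightarrow> l - h \<in> {0..l} \<Longrightarrow> h < d \<Longrightarrow> \<alpha> (l - h) < \<alpha> l"
    using has_real_derivative_pos_inc_left[OF \<alpha>_deriv[of l]] l_pos by force
  then have "\<alpha> (l - min (d/2) l) < 0" using l_pos \<alpha>_ends by (intro inc[THEN order.strict_trans2]) auto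
  then show False using \<alpha>_nonneg[of "l - min (d/2) l"] \<open>d > 0\<close> l_pos by auto
qed

lemma end_segments:
  obtains \<epsilon> where "0 < \<epsilon>" "2 * \<epsilon> < l"
    "\<And>s. s \<in> {0..\<epsilon>} \<Longrightarrow> 0 < \<alpha>' s" "\<And>s. s \<in> {l-\<epsilon>..l} \<Longrightarrow> \<alpha>' s < 0"
proof -
  have near: "\<exists>d>0. \<forall>s\<in>{0..l}. dist s x < d \<longrightarrow> dist (\<alpha>' s) (\<alpha>' x) < 1" if "x \<in> {0..l}" for x
    using \<alpha>'_cont that by (simp add: continuous_on_iff)
  obtain d0 where "d0 > 0" and d0: "\<And>s. s \<in> {0..l} \<Longrightarrow> s < d0 \<Longrightarrow> 0 < \<alpha>' s"
    using near[of 0] l_pos \<alpha>'_start by (force simp: dist_real_def abs_less_iff)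
  obtain d1 where "d1 > 0" and d1: "\<And>s. s \<in> {0..l} \<Longrightarrow> l - s < d1 \<Longrightarrow> \<alpha>' s < 0"
    using near[of l] l_pos \<alpha>'_end by (force simp: dist_real_def abs_less_iff)
  show thesis
    by (rule that[of "min (min d0 d1) l / 3"]) (use \<open>d0 > 0\<close> \<open>d1 > 0\<close> l_pos d0 d1 in auto)
qed

lemma small_values_near_ends:
  assumes "0 < \<epsilon>" "2 * \<epsilon> < l"
  obtains \<delta> where "0 < \<delta>" "\<And>s. s \<in> {0..l} \<Longrightarrow> \<alpha> s < \<delta> \<Longrightarrow> s < \<epsilon> \<or> l - \<epsilon> < s"
proof -
  obtain m where m: "m \<in> {\<epsilon>..l-\<epsilon>}" and min: "\<And>s. s \<in> {\<epsilon>..l-\<epsilon>} \<Longrightarrow> \<alpha> m \<le> \<alpha> s"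
    using continuous_attains_inf[of "{\<epsilon>..l-\<epsilon>}" \<alpha>] continuous_on_subset[OF \<alpha>_cont] assms by auto
  show thesis
  proof (rule that[of "\<alpha> m"])
    show "0 < \<alpha> m" using m assms by (intro \<alpha>_pos) auto
    show "s < \<epsilon> \<or> l - \<epsilon> < s" if "s \<in> {0..l}" "\<alpha> s < \<alpha> m" for s
      using min[of s] that by force
  qed
qed

context
  fixes \<epsilon> :: real
  assumes \<epsilon>_pos: "0 < \<epsilon>" and \<epsilon>_small: "2 * \<epsilon> < l"
    and \<alpha>'_start_pos: "\<And>s. s \<in> {0..\<epsilon>} \<Longrightarrow> 0 < \<alpha>' s"
    and \<alpha>'_end_neg: "\<And>s. s \<in> {l-\<epsilon>..l} \<Longrightarrow> \<alpha>' s < 0"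
begin

definition mirror :: "real \<Rightarrow> real" where
  "mirror x = the_inv_into {l-\<epsilon>..l} \<alpha> (\<alpha> x)"

lemma strict_mono_on_start: "strict_mono_on {0..\<epsilon>} \<alpha>"
proof (rule strict_mono_on_if_deriv_pos)
  fix s assume s: "s \<in> {0..\<epsilon>}"
  then show "(\<alpha> has_real_derivative \<alpha>' s) (at s within {0..\<epsilon>})"
    using \<epsilon>_small by (intro has_field_derivative_subset[OF \<alpha>_deriv]) auto
  show "0 < \<alpha>' s" using s by (rule \<alpha>'_start_pos)
qed

lemma inj_on_end: "inj_on \<alpha> {l-\<epsilon>..l}"
proof -
  have "strict_mono_on {l-\<epsilon>..l} (\<lambda>s. - \<alpha> s)"
  proof (rule strict_mono_on_if_deriv_pos)
    fix s assume s: "s \<in> {l-\<epsilon>..l}"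
    then show "((\<lambda>s. - \<alpha> s) has_real_derivative - \<alpha>' s) (at s within {l-\<epsilon>..l})"
      using \<epsilon>_small by (intro DERIV_minus has_field_derivative_subset[OF \<alpha>_deriv]) auto
    show "0 < - \<alpha>' s" using \<alpha>'_end_neg[OF s] by simp
  qed
  then show ?thesis by (auto dest: strict_mono_on_imp_inj_on simp: inj_on_def)
qed

lemma end_values: "{0..\<alpha> (l-\<epsilon>)} \<subseteq> \<alpha> ` {l-\<epsilon>..l}"
proof
  fix y assume y: "y \<in> {0..\<alpha> (l-\<epsilon>)}"
  have "continuous_on {l-\<epsilon>..l} \<alpha>"
    using \<epsilon>_small by (intro continuous_on_subset[OF \<alpha>_cont]) auto
  then obtain s where "l - \<epsilon> \<le> s" "s \<le> l" "\<alpha> s = y"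
    using IVT2'[of \<alpha> l y "l-\<epsilon>"] y \<alpha>_ends \<epsilon>_pos by auto
  then show "y \<in> \<alpha> ` {l-\<epsilon>..l}" by auto
qed

lemma mirror_in_end:
  assumes "0 \<le> \<alpha> x" "\<alpha> x \<le> \<alpha> (l-\<epsilon>)"
  shows "mirror x \<in> {l-\<epsilon>..l}" "\<alpha> (mirror x) = \<alpha> x"
proof -
  have "\<alpha> x \<in> \<alpha> ` {l-\<epsilon>..l}" using assms end_values by auto
  then show "mirror x \<in> {l-\<epsilon>..l}" "\<alpha> (mirror x) = \<alpha> x"
    unfolding mirror_def
    by (rule the_inv_into_into[OF inj_on_end _ order_refl], rule f_the_inv_into_f[OF inj_on_end])
qed

lemma has_derivative_mirror:
  assumes x: "x \<in> {0<..<l}" and "0 < \<alpha> x" "\<alpha> x < \<alpha> (l-\<epsilon>)"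
  shows "(mirror has_real_derivative \<alpha>' x / \<alpha>' (mirror x)) (at x)"
proof -
  have v: "mirror x \<in> {l-\<epsilon>..l}" "\<alpha> (mirror x) = \<alpha> x" using mirror_in_end assms by auto
  then have "mirror x \<noteq> l" using assms \<alpha>_ends by auto
  then have "(\<alpha> has_real_derivative \<alpha>' (mirror x)) (at (mirror x))"
    using \<alpha>_deriv[of "mirror x"] v \<epsilon>_small by (auto simp: at_within_Icc_at)
  then have "(the_inv_into {l-\<epsilon>..l} \<alpha> has_real_derivative inverse (\<alpha>' (mirror x))) (at (\<alpha> x))"
    using end_values assms v \<alpha>'_end_neg[of "mirror x"] \<epsilon>_small
    by (intro has_real_derivative_the_inv_into[where c = 0 and d = "\<alpha> (l-\<epsilon>)"]
          continuous_on_subset[OF \<alpha>_cont] inj_on_end) (auto simp: mirror_def)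
  moreover have "(\<alpha> has_real_derivative \<alpha>' x) (at x)"
    using \<alpha>_deriv[of x] x by (auto simp: at_within_Icc_at)
  ultimately have "((\<lambda>x. the_inv_into {l-\<epsilon>..l} \<alpha> (\<alpha> x)) has_real_derivative
      inverse (\<alpha>' (mirror x)) * \<alpha>' x) (at x)"
    by (rule DERIV_chain2)
  then show ?thesis by (simp add: mirror_def[abs_def] divide_inverse mult.commute)
qed

lemma mirror_reflects:
  assumes x: "x \<in> {0..\<epsilon>}" "\<alpha> x \<le> \<alpha> (l-\<epsilon>)"
    and level: "\<And>s. s \<in> {0..l} \<Longrightarrow> \<alpha> s = \<alpha> x \<Longrightarrow> s < \<epsilon> \<or> l - \<epsilon> < s"
  shows "\<beta> (mirror x) = - \<beta> x"
proof (rule negation_closed_pair[where \<beta> = \<beta>])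
  have v: "mirror x \<in> {l-\<epsilon>..l}" "\<alpha> (mirror x) = \<alpha> x"
    using mirror_in_end x \<alpha>_nonneg[of x] \<epsilon>_small by auto
  have fiber: "s \<in> {x, mirror x}" if "s \<in> {0..l}" "\<alpha> s = \<alpha> x" for s
  proof (cases "s < \<epsilon>")
    case True
    then show ?thesis
      using that x inj_onD[OF strict_mono_on_imp_inj_on[OF strict_mono_on_start], of s x] by auto
  next
    case False
    then have "l - \<epsilon> < s" using level[OF that] by auto
    then show ?thesis using that v inj_onD[OF inj_on_end, of s "mirror x"] by auto
  qed
  fix s assume "s \<in> {x, mirror x}"
  then have "s \<in> {0..l}" "\<alpha> s = \<alpha> x" using x v \<epsilon>_small by auto
  then obtain t where "t \<in> {0..l}" "\<alpha> t = \<alpha> x" "\<beta> t = - \<beta> s"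
    using reflection by metis
  then show "\<exists>t\<in>{x, mirror x}. \<beta> t = - \<beta> s" using fiber by blast
qed

end

lemma mirror_slope:
  assumes U: "open U" "u \<in> U" and reflects: "\<And>x. x \<in> U \<Longrightarrow> \<beta> (h x) = - \<beta> x"
    and u: "u \<in> {0<..<l}" "h u \<in> {0<..<l}" and signs: "0 < \<alpha>' u" "\<alpha>' (h u) < 0"
    and h_deriv: "(h has_real_derivative \<alpha>' u / \<alpha>' (h u)) (at u)"
  shows "\<alpha>' (h u) = - \<alpha>' u"
proof (rule opposite_slopes[OF signs])
  show "(\<alpha>' u)\<^sup>2 + (\<beta>' u)\<^sup>2 = 1" "(\<alpha>' (h u))\<^sup>2 + (\<beta>' (h u))\<^sup>2 = 1"
    using unit_speed u by auto
  have \<beta>_at: "(\<beta> has_real_derivative \<beta>' s) (at s)" if "s \<in> {0<..<l}" for s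
    using \<beta>_deriv[of s] that by (auto simp: at_within_Icc_at)
  have "((\<lambda>x. \<beta> (h x)) has_real_derivative \<beta>' (h u) * (\<alpha>' u / \<alpha>' (h u))) (at u)"
    using \<beta>_at[OF u(2)] h_deriv by (rule DERIV_chain2)
  moreover have "((\<lambda>x. \<beta> (h x)) has_real_derivative - \<beta>' u) (at u)"
    using DERIV_minus[OF \<beta>_at[OF u(1)]] U
    by (rule has_field_derivative_transform_within_open) (simp add: reflects)
  ultimately have "\<beta>' (h u) * (\<alpha>' u / \<alpha>' (h u)) = - \<beta>' u" by (rule DERIV_unique)
  then show "\<beta>' (h u) * \<alpha>' u = - \<beta>' u * \<alpha>' (h u)" using signs by (simp add: field_simps)
qed

lemma polar_caps:
  obtains \<epsilon> a where "0 < \<epsilon>" "2 * \<epsilon> < l"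
    "\<And>s. s \<in> {0..\<epsilon>} \<Longrightarrow> 0 < \<alpha>' s" "\<And>s. s \<in> {l-\<epsilon>..l} \<Longrightarrow> \<alpha>' s < 0"
    "0 < a" "a \<le> \<epsilon>" "\<And>x. x \<in> {0<..<a} \<Longrightarrow> 0 < \<alpha> x \<and> \<alpha> x < \<alpha> (l-\<epsilon>)"
    "\<And>x s. x \<in> {0<..<a} \<Longrightarrow> s \<in> {0..l} \<Longrightarrow> \<alpha> s = \<alpha> x \<Longrightarrow> s < \<epsilon> \<or> l - \<epsilon> < s"
proof -
  obtain \<epsilon> where \<epsilon>: "0 < \<epsilon>" "2 * \<epsilon> < l" "\<And>s. s \<in> {0..\<epsilon>} \<Longrightarrow> 0 < \<alpha>' s"
      "\<And>s. s \<in> {l-\<epsilon>..l} \<Longrightarrow> \<alpha>' s < 0"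
    by (rule end_segments) (rule that)
  obtain \<delta> where "0 < \<delta>" and near_ends: "\<And>s. s \<in> {0..l} \<Longrightarrow> \<alpha> s < \<delta> \<Longrightarrow> s < \<epsilon> \<or> l - \<epsilon> < s"
    by (rule small_values_near_ends[OF \<epsilon>(1,2)]) (rule that)
  have "\<delta> \<le> \<alpha> (l-\<epsilon>)"
  proof (rule ccontr)
    assume "\<not> \<delta> \<le> \<alpha> (l-\<epsilon>)"
    then have "l - \<epsilon> < \<epsilon> \<or> l - \<epsilon> < l - \<epsilon>" using \<epsilon>(1,2) by (intro near_ends) auto
    then show False using \<epsilon>(2) by linarith
  qed
  define c where "c = min \<delta> (\<alpha> \<epsilon>)"
  have "0 < c" using \<open>0 < \<delta>\<close> \<alpha>_pos[of \<epsilon>] \<epsilon> by (simp add: c_def)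
  have "continuous_on {0..\<epsilon>} \<alpha>" using \<epsilon>(2) by (intro continuous_on_subset[OF \<alpha>_cont]) auto
  then obtain a where a: "0 \<le> a" "a \<le> \<epsilon>" "\<alpha> a = c"
    using IVT'[of \<alpha> 0 c \<epsilon>] \<alpha>_ends(1) \<open>0 < c\<close> \<epsilon>(1) by (auto simp: c_def)
  have "0 < a" using a \<open>0 < c\<close> \<alpha>_ends by (cases "a = 0") auto
  have small: "0 < \<alpha> x \<and> \<alpha> x < \<delta>" if "x \<in> {0<..<a}" for x
  proof -
    have "\<alpha> x < \<alpha> a" using that a by (intro strict_mono_onD[OF strict_mono_on_start[OF \<epsilon>]]) auto
    moreover have "0 < \<alpha> x" using that a \<epsilon>(2) by (intro \<alpha>_pos) auto
    ultimately show ?thesis using a by (auto simp: c_def)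
  qed
  show thesis
  proof (rule that[OF \<epsilon> \<open>0 < a\<close> \<open>a \<le> \<epsilon>\<close>])
    show "0 < \<alpha> x \<and> \<alpha> x < \<alpha> (l-\<epsilon>)" if "x \<in> {0<..<a}" for x
      using small[OF that] \<open>\<delta> \<le> \<alpha> (l-\<epsilon>)\<close> by auto
    show "s < \<epsilon> \<or> l - \<epsilon> < s" if "x \<in> {0<..<a}" "s \<in> {0..l}" "\<alpha> s = \<alpha> x" for x s
      using near_ends[OF that(2)] small[OF that(1)] that(3) by auto
  qed
qed

lemma mirror_pair:
  obtains u v where "u \<in> {0<..<l}" "v \<in> {0<..<l}" "u \<noteq> v"
    "\<alpha> v = \<alpha> u" "\<beta> v = - \<beta> u" "\<alpha>' v = - \<alpha>' u"
proof -
  obtain \<epsilon> a where \<epsilon>: "0 < \<epsilon>" "2 * \<epsilon> < l" "\<And>s. s \<in> {0..\<epsilon>} \<Longrightarrow> 0 < \<alpha>' s"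
      "\<And>s. s \<in> {l-\<epsilon>..l} \<Longrightarrow> \<alpha>' s < 0"
    and "0 < a" "a \<le> \<epsilon>" and small: "\<And>x. x \<in> {0<..<a} \<Longrightarrow> 0 < \<alpha> x \<and> \<alpha> x < \<alpha> (l-\<epsilon>)"
    and level: "\<And>x s. x \<in> {0<..<a} \<Longrightarrow> s \<in> {0..l} \<Longrightarrow> \<alpha> s = \<alpha> x \<Longrightarrow> s < \<epsilon> \<or> l - \<epsilon> < s"
    by (rule polar_caps) (rule that)
  define h where "h = mirror \<epsilon>"
  define u where "u = a / 2"
  have u: "u \<in> {0<..<a}" using \<open>0 < a\<close> by (simp add: u_def)
  then have u_in: "u \<in> {0<..<l}" and "u < \<epsilon>" using \<open>a \<le> \<epsilon>\<close> \<epsilon>(2) by auto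
  have hu: "h u \<in> {l-\<epsilon>..l}" "\<alpha> (h u) = \<alpha> u"
    using mirror_in_end[OF \<epsilon>, of u] small[OF u] unfolding h_def by auto
  have "h u \<noteq> l" using hu(2) small[OF u] \<alpha>_ends(2) by auto
  then have hu_in: "h u \<in> {0<..<l}" using hu(1) \<epsilon>(1,2) by auto
  have reflects: "\<beta> (h x) = - \<beta> x" if "x \<in> {0<..<a}" for x
    unfolding h_def using small[OF that] level[OF that] that \<open>a \<le> \<epsilon>\<close>
    by (intro mirror_reflects[OF \<epsilon>]) auto
  have h_deriv: "(h has_real_derivative \<alpha>' u / \<alpha>' (h u)) (at u)"
    unfolding h_def using small[OF u] by (intro has_derivative_mirror[OF \<epsilon> u_in]) auto
  have "\<alpha>' (h u) = - \<alpha>' u"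
  proof (rule mirror_slope[OF _ u reflects u_in hu_in _ _ h_deriv])
    show "0 < \<alpha>' u" using \<open>u < \<epsilon>\<close> u_in by (intro \<epsilon>(3)) auto
    show "\<alpha>' (h u) < 0" using hu(1) by (rule \<epsilon>(4))
  qed simp
  moreover have "u \<noteq> h u" using \<open>u < \<epsilon>\<close> hu(1) \<epsilon>(2) by auto
  ultimately show thesis using that u_in hu_in hu(2) reflects[OF u] by metis
qed

end

section \<open>Two concentric regular polygons of vortices\<close>

definition unit_root :: "nat \<Rightarrow> real \<Rightarrow> complex" where
  "unit_root n x = cis (2 * pi / real n * x)"

lemma norm_unit_root [simp]: "cmod (unit_root n x) = 1"
  by (simp add: unit_root_def)

lemma unit_root_nonzero [simp]: "unit_root n x \<noteq> 0"
  by (simp add: unit_root_def)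

lemma unit_root_diff: "unit_root n (x - y) = unit_root n x / unit_root n y"
  by (simp add: unit_root_def cis_divide right_diff_distrib)

lemma cnj_unit_root: "cnj (unit_root n x) = unit_root n (- x)"
  by (simp add: unit_root_def cis_cnj)

lemma unit_root_mult_cnj: "unit_root n x * cnj (unit_root n x) = 1"
  using complex_norm_square[of "unit_root n x"] by simp

lemma unit_root_periodic:
  assumes "0 < n" shows "unit_root n (x + real n * of_int j) = unit_root n x"
proof -
  have "2 * pi / real n * (x + real n * of_int j) = 2 * pi / real n * x + 2 * pi * of_int j"
    using assms by (simp add: field_simps)
  then show ?thesis by (simp add: unit_root_def cis_mult[symmetric])
qed

lemma unit_root_mod: "0 < n \<Longrightarrow> unit_root n (real (k mod n)) = unit_root n (real k)"
  using unit_root_periodic[of n "real (k mod n)" "int (k div n)"]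
  by (metis mod_div_mult_eq of_int_of_nat_eq of_nat_add of_nat_mult mult.commute)

lemma unit_root_eq_1_iff:
  assumes "0 < n" "\<bar>x\<bar> < real n"
  shows "unit_root n x = 1 \<longleftrightarrow> x = 0"
proof
  assume "unit_root n x = 1"
  then have "cos (2 * pi / real n * x) = 1"
    unfolding unit_root_def by (metis cis.sel(1) one_complex.sel(1))
  then obtain j :: int where "2 * pi / real n * x = j * 2 * pi" by (auto simp: cos_one_2pi_int)
  then have x: "x = real n * j" using assms(1) by (simp add: field_simps)
  then have "\<bar>j\<bar> < 1" using assms by (simp add: abs_mult)
  then show "x = 0" using x by simp
qed (simp add: unit_root_def)

lemma unit_root_inj:
  assumes "0 < n" "a < n" "b < n" "unit_root n (real a) = unit_root n (real b)"
  shows "a = b"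
proof -
  have "unit_root n (real a - real b) = 1" using assms(4) by (simp add: unit_root_diff)
  moreover have "\<bar>real a - real b\<bar> < real n" using assms(2,3) by linarith
  ultimately show ?thesis using unit_root_eq_1_iff[OF assms(1)] by simp
qed

lemma sum_unit_root_shift:
  assumes "0 < n" "m < n"
  shows "(\<Sum>k<n. f (unit_root n (real k - real m))) = (\<Sum>k<n. f (unit_root n (real k)))"
proof (rule sum.reindex_bij_witness[where i = "\<lambda>b. (b + m) mod n" and j = "\<lambda>a. (a + n - m) mod n"])
  fix a assume a: "a \<in> {..<n}"
  show "(((a + n - m) mod n) + m) mod n = a"
    using a assms by (simp add: mod_add_left_eq)
  show "(a + n - m) mod n \<in> {..<n}" using assms by simp
  have "unit_root n (real ((a + n - m) mod n)) = unit_root n ((real a - real m) + real n * of_int 1)"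
    using unit_root_mod[OF assms(1), of "a + n - m"] assms by (simp add: algebra_simps)
  then show "f (unit_root n (real ((a + n - m) mod n))) = f (unit_root n (real a - real m))"
    by (simp only: unit_root_periodic[OF assms(1)])
next
  fix b assume b: "b \<in> {..<n}"
  show "((b + m) mod n + n - m) mod n = b"
    using b assms by (cases "b + m < n") (auto simp: mod_if)
  show "(b + m) mod n \<in> {..<n}" using assms by simp
qed

lemma sum_unit_root_reflect:
  assumes "0 < n"
  shows "(\<Sum>k<n. f (unit_root n (- real k))) = (\<Sum>k<n. f (unit_root n (real k)))"
proof (rule sum.reindex_bij_witness[where i = "\<lambda>b. (n - b) mod n" and j = "\<lambda>a. (n - a) mod n"])
  fix a assume a: "a \<in> {..<n}"
  show "(n - (n - a) mod n) mod n = a"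
    using a assms by (cases "a = 0") auto
  show "(n - a) mod n \<in> {..<n}" using assms by simp
  have "unit_root n (real ((n - a) mod n)) = unit_root n (- real a + real n * of_int 1)"
    using unit_root_mod[OF assms(1), of "n - a"] a by (simp add: of_nat_diff)
  then show "f (unit_root n (real ((n - a) mod n))) = f (unit_root n (- real a))"
    by (simp only: unit_root_periodic[OF assms(1)])
next
  fix b assume b: "b \<in> {..<n}"
  show "(n - (n - b) mod n) mod n = b"
    using b assms by (cases "b = 0") auto
  show "(n - b) mod n \<in> {..<n}" using assms by simp
qed

(* For rho = 1 the k = 0 term is 1 / 0 = 0, which is exactly the excluded self-interaction. *)
definition ring_sum :: "nat \<Rightarrow> real \<Rightarrow> complex" where
  "ring_sum n \<rho> = (\<Sum>k<n. 1 / (1 - of_real \<rho> * unit_root n (real k)))"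

lemma cnj_ring_sum: "0 < n \<Longrightarrow> cnj (ring_sum n \<rho>) = ring_sum n \<rho>"
  using sum_unit_root_reflect[of n "\<lambda>z. 1 / (1 - of_real \<rho> * z)"]
  by (simp add: ring_sum_def cnj_unit_root)

lemma ring_sum_real: "0 < n \<Longrightarrow> ring_sum n \<rho> = of_real (Re (ring_sum n \<rho>))"
  using cnj_ring_sum[of n \<rho>] by (simp add: complex_eq_iff)

lemma inverse_sum_pair:
  assumes "c * cnj c = 1" "\<rho> \<noteq> 0" "c \<noteq> of_real \<rho>"
  shows "1 / (1 - of_real \<rho> * cnj c) + 1 / (1 - of_real (1 / \<rho>) * c) = 1"
proof -
  have "c \<noteq> 0" "c - of_real \<rho> \<noteq> 0" using assms by auto
  have "cnj c = 1 / c" using assms(1) \<open>c \<noteq> 0\<close> by (simp add: field_simps)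
  then have "1 / (1 - of_real \<rho> * cnj c) = c / (c - of_real \<rho>)"
    using \<open>c \<noteq> 0\<close> by (simp only:) (simp add: field_simps)
  moreover have "1 / (1 - of_real (1 / \<rho>) * c) = of_real \<rho> / (of_real \<rho> - c)"
    using assms(2) by (simp add: field_simps)
  moreover have "of_real \<rho> / (of_real \<rho> - c) = - (of_real \<rho> / (c - of_real \<rho>))"
    by (metis divide_minus_right minus_diff_eq)
  ultimately show ?thesis
    using \<open>c - of_real \<rho> \<noteq> 0\<close> by (simp add: diff_divide_distrib[symmetric])
qed

lemma ring_sum_one:
  assumes "0 < n" shows "ring_sum n 1 = of_real ((real n - 1) / 2)"
proof -
  have "cnj (ring_sum n 1) + ring_sum n 1 =
      (\<Sum>k<n. 1 / (1 - cnj (unit_root n (real k))) + 1 / (1 - unit_root n (real k)))"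
    by (simp add: ring_sum_def sum.distrib)
  also have "\<dots> = (\<Sum>k<n. if k = 0 then 0 else 1)"
  proof (rule sum.cong[OF refl])
    fix k assume "k \<in> {..<n}"
    show "1 / (1 - cnj (unit_root n (real k))) + 1 / (1 - unit_root n (real k)) = (if k = 0 then 0 else 1)"
    proof (cases "k = 0")
      case False
      with \<open>k \<in> {..<n}\<close> have "unit_root n (real k) \<noteq> 1"
        using unit_root_eq_1_iff[OF assms, of "real k"] by simp
      then show ?thesis
        using False inverse_sum_pair[OF unit_root_mult_cnj, of 1 n "real k"] by simp
    qed (simp add: unit_root_def)
  qed
  also have "\<dots> = of_nat (n - 1)"
  proof -
    obtain n' where n': "n = Suc n'" using assms by (cases n) auto
    show ?thesis unfolding n' sum.lessThan_Suc_shift by simp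
  qed
  finally show ?thesis using cnj_ring_sum[OF assms] assms by (simp add: of_nat_diff field_simps)
qed

lemma ring_sum_add_inverse:
  assumes "0 < n" "0 < \<rho>" "\<rho> \<noteq> 1"
  shows "ring_sum n \<rho> + ring_sum n (1 / \<rho>) = of_nat n"
proof -
  have "ring_sum n \<rho> + ring_sum n (1 / \<rho>) = cnj (ring_sum n \<rho>) + ring_sum n (1 / \<rho>)"
    using cnj_ring_sum[OF assms(1)] by simp
  also have "\<dots> = (\<Sum>k<n. 1 / (1 - of_real \<rho> * cnj (unit_root n (real k)))
                       + 1 / (1 - of_real (1 / \<rho>) * unit_root n (real k)))"
    by (simp add: ring_sum_def sum.distrib)
  also have "\<dots> = (\<Sum>k<n. 1)"
  proof (rule sum.cong[OF refl], rule inverse_sum_pair[OF unit_root_mult_cnj])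
    fix k
    have "cmod (unit_root n (real k)) \<noteq> cmod (of_real \<rho>)" using assms by simp
    then show "unit_root n (real k) \<noteq> of_real \<rho>" by metis
    show "\<rho> \<noteq> 0" using assms by simp
  qed
  finally show ?thesis by simp
qed

lemma sum_ring_interaction:
  assumes "0 < n" "m < n" "0 < R" "E \<noteq> 0"
  defines "p \<equiv> of_real R * unit_root n (real m) * E"
  shows "(\<Sum>k<n. p / (p - of_real R' * unit_root n (real k) * E)) = ring_sum n (R' / R)"
proof -
  have "p / (p - of_real R' * unit_root n (real k) * E)
      = 1 / (1 - of_real (R' / R) * unit_root n (real k - real m))" for k
  proof -
    have "p \<noteq> 0" using assms by (simp add: p_def)
    moreover have "p - of_real R' * unit_root n (real k) * E
        = p * (1 - of_real (R' / R) * unit_root n (real k - real m))"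
      using assms by (simp add: p_def unit_root_diff field_simps)
    ultimately show ?thesis by simp
  qed
  then show ?thesis
    using sum_unit_root_shift[OF assms(1,2), of "\<lambda>z. 1 / (1 - of_real (R' / R) * z)"]
    by (simp add: ring_sum_def)
qed

lemma sum_atLeast1_atMost_double:
  fixes f :: "nat \<Rightarrow> 'a::comm_monoid_add"
  shows "(\<Sum>j\<in>{1..2*n}. f j) = (\<Sum>k<n. f (k + 1)) + (\<Sum>k<n. f (n + k + 1))"
proof -
  have "(\<Sum>j\<in>{1..n+n}. f j) = (\<Sum>j\<in>{1..n}. f j) + (\<Sum>j\<in>{n+1..n+n}. f j)"
    by (rule sum.ub_add_nat) simp
  also have "(\<Sum>j\<in>{n+1..n+n}. f j) = (\<Sum>j\<in>{1..n}. f (j + n))"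
    using sum.shift_bounds_cl_nat_ivl[of f 1 n n] by (simp add: add.commute)
  finally show ?thesis
    using sum.atLeast1_atMost_eq[of f n] sum.atLeast1_atMost_eq[of "\<lambda>j. f (j + n)" n]
    by (simp add: mult_2_right ac_simps)
qed

lemma rot_config_first:
  "1 \<le> i \<Longrightarrow> i \<le> n \<Longrightarrow>
    rot_config n r1 r2 \<omega> i t = of_real r1 * unit_root n (real (i - 1)) * cis (\<omega> * t)"
  unfolding rot_config_def unit_root_def by (simp add: cis_mult of_nat_diff)

lemma rot_config_second:
  "n < i \<Longrightarrow>
    rot_config n r1 r2 \<omega> i t = of_real r2 * unit_root n (real (i - n - 1)) * cis (\<omega> * t)"
  unfolding rot_config_def unit_root_def by (simp add: cis_mult of_nat_diff algebra_simps)

lemma rot_config_rotates: "rot_config n r1 r2 \<omega> i t = rot_config n r1 r2 \<omega> i 0 * cis (\<omega> * t)"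
  unfolding rot_config_def by (simp add: cis_mult)

lemma norm_rot_config:
  "0 < r1 \<Longrightarrow> 0 < r2 \<Longrightarrow> i \<in> {1..2*n} \<Longrightarrow>
    cmod (rot_config n r1 r2 \<omega> i t) = (if i \<le> n then r1 else r2)"
  by (simp add: rot_config_first rot_config_second norm_mult)

lemma rot_config_interaction:
  fixes \<omega> t :: real
  assumes "0 < n" "0 < r1" "0 < r2" and i: "i \<in> {1..2*n}"
  defines "q \<equiv> \<lambda>j. rot_config n r1 r2 \<omega> j t"
  shows "(\<Sum>j\<in>{1..2*n}. of_real (deg n i * deg n j) * (q i / (q i - q j))) =
    ring_sum n 1 - ring_sum n (if i \<le> n then r2 / r1 else r1 / r2)"
proof -
  let ?E = "cis (\<omega> * t)"
  have ring1: "q (Suc k) = of_real r1 * unit_root n (real k) * ?E" and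
    ring2: "q (Suc (n + k)) = of_real r2 * unit_root n (real k) * ?E" if "k < n" for k
    using that by (simp_all add: q_def rot_config_first rot_config_second)
  have interaction: "(\<Sum>k<n. q i / (q i - of_real R' * unit_root n (real k) * ?E))
      = ring_sum n (R' / R)" if "q i = of_real R * unit_root n (real m) * ?E" "m < n" "0 < R" for R R' m
    using sum_ring_interaction[OF assms(1) that(2,3), of ?E R'] that(1) by simp
  have split: "(\<Sum>j\<in>{1..2*n}. of_real (deg n i * deg n j) * (q i / (q i - q j))) =
      of_real (deg n i) * ((\<Sum>k<n. q i / (q i - of_real r1 * unit_root n (real k) * ?E))
                         - (\<Sum>k<n. q i / (q i - of_real r2 * unit_root n (real k) * ?E)))"
    unfolding sum_atLeast1_atMost_double diff_conv_add_uminus sum_negf[symmetric] distrib_left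
      sum_distrib_left
    by (intro arg_cong2[where f = "(+)"] sum.cong) (auto simp: deg_def ring1 ring2)
  show ?thesis
  proof (cases "i \<le> n")
    case True
    then have qi: "q i = of_real r1 * unit_root n (real (i - 1)) * ?E" "i - 1 < n"
      using i by (auto simp: q_def rot_config_first)
    show ?thesis
      unfolding split interaction[OF qi \<open>0 < r1\<close>] using True \<open>0 < r1\<close> by (simp add: deg_def)
  next
    case False
    then have qi: "q i = of_real r2 * unit_root n (real (i - n - 1)) * ?E" "i - n - 1 < n"
      using i by (auto simp: q_def rot_config_second)
    show ?thesis
      unfolding split interaction[OF qi \<open>0 < r2\<close>] using False \<open>0 < r2\<close> by (simp add: deg_def)
  qed
qed

lemma perp_div_norm_square:
  assumes "p \<noteq> 0"
  shows "perp (p - q) / of_real ((cmod (p - q))\<^sup>2) = \<i> / cnj p * cnj (p / (p - q))"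
proof (cases "p = q")
  case False
  then have "p - q \<noteq> 0" "cnj p \<noteq> 0" using assms by auto
  have "perp (p - q) / of_real ((cmod (p - q))\<^sup>2) = \<i> * (p - q) / ((p - q) * cnj (p - q))"
    unfolding perp_def complex_norm_square ..
  also have "\<dots> = \<i> / cnj (p - q)" using \<open>p - q \<noteq> 0\<close> by simp
  also have "\<dots> = \<i> / cnj p * cnj (p / (p - q))" using \<open>p - q \<noteq> 0\<close> \<open>cnj p \<noteq> 0\<close> by (simp add: field_simps)
  finally show ?thesis .
qed (simp add: perp_def)

lemma pv_rhs_eq:
  assumes p: "q i \<noteq> 0" and i: "i \<in> {1..N}"
    and interaction: "(\<Sum>j\<in>{1..N}. of_real (d i * d j) * (q i / (q i - q j))) = of_real w"
  shows "pv_rhs \<alpha> da S N d q i =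
    \<i> * q i * of_real ((1 - da (S (sph_angle (q i))) + 2 * w) / (\<alpha> (S (sph_angle (q i))))\<^sup>2)"
proof -
  define a a' where "a = \<alpha> (S (sph_angle (q i)))" and "a' = da (S (sph_angle (q i)))"
  let ?T = "\<lambda>j. of_real (d i * d j) * perp (q i - q j) / of_real ((cmod (q i - q j))\<^sup>2)"
  have "(\<Sum>j\<in>{1..N} - {i}. ?T j) = (\<Sum>j\<in>{1..N}. ?T j)"
    using sum_diff1[of "{1..N}" ?T i] i by (simp add: perp_def)
  also have "\<dots> = (\<Sum>j\<in>{1..N}. \<i> / cnj (q i) * cnj (of_real (d i * d j) * (q i / (q i - q j))))"
    by (rule sum.cong[OF refl])
       (simp only: times_divide_eq_right[symmetric] perp_div_norm_square[OF p], simp)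
  also have "\<dots> = \<i> / cnj (q i) * cnj (\<Sum>j\<in>{1..N}. of_real (d i * d j) * (q i / (q i - q j)))"
    by (simp only: sum_distrib_left cnj_sum)
  also have "\<dots> = \<i> / cnj (q i) * of_real w"
    by (simp only: interaction complex_cnj_complex_of_real)
  finally have pairs: "(\<Sum>j\<in>{1..N} - {i}. ?T j) = \<i> / cnj (q i) * of_real w" .
  have self: "perp (q i) / of_real ((cmod (q i))\<^sup>2) = \<i> / cnj (q i)"
    using perp_div_norm_square[OF p, of 0] p by simp
  have "pv_rhs \<alpha> da S N d q i = of_real ((cmod (q i))\<^sup>2 / a\<^sup>2) *
      (of_real (1 - a') * perp (q i) / of_real ((cmod (q i))\<^sup>2) + 2 * (\<i> / cnj (q i) * of_real w))"
    unfolding pv_rhs_def a_def a'_def pairs ..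
  also have "\<dots> = of_real ((cmod (q i))\<^sup>2 / a\<^sup>2) *
      (of_real (1 - a') * (\<i> / cnj (q i)) + 2 * (\<i> / cnj (q i) * of_real w))"
    by (simp only: times_divide_eq_right[symmetric] self)
  also have "\<dots> = \<i> * q i * of_real ((1 - a' + 2 * w) / a\<^sup>2)"
    unfolding of_real_divide complex_norm_square
    using p by (cases "a = 0") (simp_all add: field_simps)
  finally show ?thesis by (simp add: a_def a'_def)
qed

lemma has_vector_derivative_rotation:
  "((\<lambda>t. c * cis (\<omega> * t)) has_vector_derivative \<i> * of_real \<omega> * (c * cis (\<omega> * t))) (at t)"
proof -
  have "((\<lambda>t. cis (\<omega> * t)) has_derivative (\<lambda>h. (\<omega> * h) *\<^sub>R (\<i> * cis (\<omega> * t)))) (at t)"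
    by (rule has_derivative_cis) (auto intro!: derivative_eq_intros)
  then have "((\<lambda>t. cis (\<omega> * t)) has_vector_derivative \<i> * of_real \<omega> * cis (\<omega> * t)) (at t)"
    by (simp add: has_vector_derivative_def scaleR_conv_of_real algebra_simps)
  then have "((\<lambda>t. c * cis (\<omega> * t)) has_vector_derivative c * (\<i> * of_real \<omega> * cis (\<omega> * t))) (at t)"
    by (rule has_vector_derivative_mult_right)
  then show ?thesis by (simp only: ac_simps)
qed

lemma is_pv_solution_rigid_rotation:
  assumes rotates: "\<And>i t. p i t = p i 0 * cis (\<omega> * t)"
    and rhs: "\<And>i t. i \<in> {1..N} \<Longrightarrow>
      pv_rhs \<alpha> da S N d (\<lambda>j. p j t) i = of_real (d i) * (\<i> * of_real \<omega> * p i t)"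
  shows "is_pv_solution \<alpha> da S N d p"
  unfolding is_pv_solution_def
proof (intro allI ballI)
  fix t i assume "i \<in> {1..N}"
  have "(\<lambda>t. p i 0 * cis (\<omega> * t)) = p i" by (rule ext, rule rotates[symmetric])
  then have "(p i has_vector_derivative \<i> * of_real \<omega> * p i t) (at t)"
    using has_vector_derivative_rotation[of "p i 0" \<omega> t] unfolding rotates[of i t, symmetric]
    by simp
  then show "\<exists>v. (p i has_vector_derivative v) (at t) \<and>
      of_real (d i) * v = pv_rhs \<alpha> da S N d (\<lambda>j. p j t) i"
    using rhs[OF \<open>i \<in> {1..N}\<close>] by auto
qed

lemma rot_config_interaction_real:
  fixes \<omega> t :: real
  assumes n: "0 < n" and r: "0 < r1" "0 < r2" "r1 \<noteq> r2" and i: "i \<in> {1..2*n}"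
  defines "x \<equiv> Re (ring_sum n (r2 / r1))" and "q \<equiv> \<lambda>j. rot_config n r1 r2 \<omega> j t"
  shows "(\<Sum>j\<in>{1..2*n}. of_real (deg n i * deg n j) * (q i / (q i - q j))) =
    of_real (if i \<le> n then (real n - 1) / 2 - x else x - (real n + 1) / 2)"
proof -
  have x: "ring_sum n (r2 / r1) = of_real x" using ring_sum_real[OF n] by (simp add: x_def)
  have "ring_sum n (r2 / r1) + ring_sum n (r1 / r2) = of_nat n"
    using ring_sum_add_inverse[OF n, of "r2 / r1"] r by simp
  then have x': "ring_sum n (r1 / r2) = of_real (real n - x)" using x by (simp add: algebra_simps)
  show ?thesis
    using rot_config_interaction[OF n r(1,2) i, of \<omega> t] ring_sum_one[OF n] x x'
    unfolding q_def by (simp add: of_real_diff[symmetric] del: of_real_diff) (simp add: field_simps)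
qed

lemma rot_config_is_pv_solution:
  assumes n: "0 < n" and r: "0 < r1" "0 < r2" "r1 \<noteq> r2"
    and ring1: "\<And>z. cmod z = r1 \<Longrightarrow> \<alpha> (S (sph_angle z)) = a \<and> da (S (sph_angle z)) = a'"
    and ring2: "\<And>z. cmod z = r2 \<Longrightarrow> \<alpha> (S (sph_angle z)) = a \<and> da (S (sph_angle z)) = - a'"
  shows "\<exists>\<omega>. is_pv_solution \<alpha> da S (2*n) (deg n) (rot_config n r1 r2 \<omega>)"
proof -
  define x where "x = Re (ring_sum n (r2 / r1))"
  define \<omega> where "\<omega> = (real n - a' - 2 * x) / a\<^sup>2"
  show ?thesis
  proof (intro exI is_pv_solution_rigid_rotation)
    fix i t assume i: "i \<in> {1..2*n}"
    let ?q = "\<lambda>j. rot_config n r1 r2 \<omega> j t"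
    define w where "w = (if i \<le> n then (real n - 1) / 2 - x else x - (real n + 1) / 2)"
    have "(\<Sum>j\<in>{1..2*n}. of_real (deg n i * deg n j) * (?q i / (?q i - ?q j))) = of_real w"
      unfolding w_def x_def by (rule rot_config_interaction_real[OF n r i])
    moreover have "0 < cmod (?q i)" using norm_rot_config[OF r(1,2) i] r by simp
    then have "?q i \<noteq> 0" by auto
    ultimately have "pv_rhs \<alpha> da S (2*n) (deg n) ?q i =
        \<i> * ?q i * of_real ((1 - da (S (sph_angle (?q i))) + 2 * w) / (\<alpha> (S (sph_angle (?q i))))\<^sup>2)"
      using i by (intro pv_rhs_eq) auto
    moreover have "(1 - da (S (sph_angle (?q i))) + 2 * w) / (\<alpha> (S (sph_angle (?q i))))\<^sup>2
        = deg n i * \<omega>"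
    proof (cases "i \<le> n")
      case True
      then have "cmod (?q i) = r1" using norm_rot_config[OF r(1,2) i] by simp
      moreover have "1 - a' + 2 * w = real n - a' - 2 * x" using True by (simp add: w_def field_simps)
      ultimately show ?thesis using True ring1 by (simp add: deg_def \<omega>_def)
    next
      case False
      then have "cmod (?q i) = r2" using norm_rot_config[OF r(1,2) i] by simp
      moreover have "1 + a' + 2 * w = - (real n - a' - 2 * x)" using False by (simp add: w_def field_simps)
      ultimately show ?thesis using False ring2 by (simp add: deg_def \<omega>_def minus_divide_left)
    qed
    ultimately show "pv_rhs \<alpha> da S (2*n) (deg n) ?q i = of_real (deg n i) * (\<i> * of_real \<omega> * ?q i)"
      by (simp only: of_real_mult ac_simps)
  qed (rule rot_config_rotates)
qed

lemma rot_config_inj: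
  assumes n: "0 < n" and r: "0 < r1" "0 < r2" "r1 \<noteq> r2"
    and ij: "i \<in> {1..2*n}" "j \<in> {1..2*n}"
    and eq: "rot_config n r1 r2 \<omega> i t = rot_config n r1 r2 \<omega> j t"
  shows "i = j"
proof -
  have "(if i \<le> n then r1 else r2) = (if j \<le> n then r1 else r2)"
    using eq norm_rot_config[OF r(1,2) ij(1), of \<omega> t] norm_rot_config[OF r(1,2) ij(2), of \<omega> t]
    by metis
  then have same_ring: "i \<le> n \<longleftrightarrow> j \<le> n" using r(3) by (auto split: if_splits)
  show ?thesis
  proof (cases "i \<le> n")
    case True
    then have "unit_root n (real (i - 1)) = unit_root n (real (j - 1))"
      using eq same_ring ij r by (simp add: rot_config_first)
    then have "i - 1 = j - 1" by (rule unit_root_inj[OF n, rotated 2]) (use True same_ring ij in auto)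
    then show ?thesis using ij by auto
  next
    case False
    then have "unit_root n (real (i - n - 1)) = unit_root n (real (j - n - 1))"
      using eq same_ring ij r by (simp add: rot_config_second)
    then have "i - n - 1 = j - n - 1"
      by (rule unit_root_inj[OF n, rotated 2]) (use False same_ring ij in auto)
    then show ?thesis using False same_ring by auto
  qed
qed

section \<open>Circles, parallels and the surface\<close>

lemma circle_sph_angle:
  assumes "0 < \<phi>" "\<phi> < pi"
  obtains r where "0 < r" "\<And>z. cmod z = r \<Longrightarrow> sph_angle z = \<phi>"
proof -
  define c where "c = cos \<phi>"
  have "\<bar>c\<bar> < 1"
    using sin_gt_zero[OF assms] sin_cos_squared_add[of \<phi>] unfolding c_def
    by (metis abs_square_less_1 add_le_same_cancel2 not_less power2_eq_square zero_less_mult_iff)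
  define r where "r = sqrt ((1 - c) / (1 + c))"
  have "0 < r" using \<open>\<bar>c\<bar> < 1\<close> by (simp add: r_def)
  have "(1 - r\<^sup>2) / (1 + r\<^sup>2) = c" using \<open>\<bar>c\<bar> < 1\<close> by (simp add: r_def field_simps)
  then have "sph_angle z = \<phi>" if "cmod z = r" for z
    using that assms by (simp add: sph_angle_def c_def arccos_cos)
  with \<open>0 < r\<close> show thesis by (rule that)
qed

lemma circles_over_parallels:
  fixes S :: "real \<Rightarrow> real"
  assumes S_cont: "continuous_on {0..pi} S" and S_ends: "S 0 = 0" "S pi = l"
    and uv: "u \<in> {0<..<l}" "v \<in> {0<..<l}" "u \<noteq> v"
  obtains r1 r2 where "0 < r1" "0 < r2" "r1 \<noteq> r2"
    "\<And>z. cmod z = r1 \<Longrightarrow> S (sph_angle z) = u" "\<And>z. cmod z = r2 \<Longrightarrow> S (sph_angle z) = v"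
proof -
  obtain \<phi>1 \<phi>2 where "0 < \<phi>1" "\<phi>1 < pi" "S \<phi>1 = u" "0 < \<phi>2" "\<phi>2 < pi" "S \<phi>2 = v"
    using IVT_interior[OF _ S_cont] uv(1,2) S_ends pi_ge_zero by (metis greaterThanLessThan_iff)
  moreover obtain r1 r2 where "0 < r1" "0 < r2"
    and \<phi>: "\<And>z. cmod z = r1 \<Longrightarrow> sph_angle z = \<phi>1" "\<And>z. cmod z = r2 \<Longrightarrow> sph_angle z = \<phi>2"
    using circle_sph_angle[OF \<open>0 < \<phi>1\<close> \<open>\<phi>1 < pi\<close>] circle_sph_angle[OF \<open>0 < \<phi>2\<close> \<open>\<phi>2 < pi\<close>]
    by metis
  moreover have "r1 \<noteq> r2"
    using \<phi>[of "of_real r1"] \<open>0 < r1\<close> uv(3) \<open>S \<phi>1 = u\<close> \<open>S \<phi>2 = v\<close> by force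
  ultimately show thesis using that by simp
qed

lemma surfM_reflection_partner:
  assumes symmetric: "\<And>x. x \<in> surfM \<alpha> \<beta> l \<Longrightarrow> reflXY x \<in> surfM \<alpha> \<beta> l"
    and nonneg: "\<And>s. s \<in> {0..l} \<Longrightarrow> 0 \<le> \<alpha> s" and s: "s \<in> {0..l}"
  shows "\<exists>t\<in>{0..l}. \<alpha> t = \<alpha> s \<and> \<beta> t = - \<beta> s"
proof -
  have "(\<alpha> s * cos 0, \<alpha> s * sin 0, \<beta> s) \<in> surfM \<alpha> \<beta> l" unfolding surfM_def using s by blast
  then have "reflXY (\<alpha> s * cos 0, \<alpha> s * sin 0, \<beta> s) \<in> surfM \<alpha> \<beta> l" by (rule symmetric)
  then obtain t \<theta> where t: "t \<in> {0..l}"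
    and "\<alpha> s = \<alpha> t * cos \<theta>" "0 = \<alpha> t * sin \<theta>" "- \<beta> s = \<beta> t"
    unfolding surfM_def reflXY_def by auto
  moreover from this have "(\<alpha> s)\<^sup>2 = (\<alpha> t * cos \<theta>)\<^sup>2 + (\<alpha> t * sin \<theta>)\<^sup>2" by simp
  then have "(\<alpha> s)\<^sup>2 = (\<alpha> t)\<^sup>2 * ((cos \<theta>)\<^sup>2 + (sin \<theta>)\<^sup>2)"
    by (simp only: power_mult_distrib distrib_left)
  then have "\<alpha> t = \<alpha> s" using nonneg[OF s] nonneg[OF t] by simp
  ultimately show ?thesis by auto
qed

lemma Pmap_circles_reflect:
  assumes r: "0 < r1" "0 < r2"
    and circles: "\<And>z. cmod z = r1 \<Longrightarrow> S (sph_angle z) = u" "\<And>z. cmod z = r2 \<Longrightarrow> S (sph_angle z) = v"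
    and mirror: "\<alpha> v = \<alpha> u" "\<beta> v = - \<beta> u"
  shows "Pmap \<alpha> \<beta> S ` {z. cmod z = r2} = reflXY ` Pmap \<alpha> \<beta> S ` {z. cmod z = r1}"
proof -
  let ?scale = "\<lambda>z. of_real (r2 / r1) * z"
  have scale: "?scale ` {z. cmod z = r1} = {z. cmod z = r2}"
  proof (intro equalityI subsetI)
    fix w assume "w \<in> ?scale ` {z. cmod z = r1}"
    then obtain z where "cmod z = r1" "w = ?scale z" by blast
    then show "w \<in> {z. cmod z = r2}" using r by (simp add: norm_mult norm_divide)
  next
    fix w assume "w \<in> {z. cmod z = r2}"
    then have "cmod (of_real (r1 / r2) * w) = r1" using r by (simp add: norm_mult norm_divide)
    moreover have "?scale (of_real (r1 / r2) * w) = w"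
      using r by (simp add: field_simps)
    ultimately show "w \<in> ?scale ` {z. cmod z = r1}" by (metis (mono_tags) image_eqI mem_Collect_eq)
  qed
  have reflect: "reflXY (Pmap \<alpha> \<beta> S z) = Pmap \<alpha> \<beta> S (?scale z)" if "cmod z = r1" for z
  proof -
    have "cmod (?scale z) = r2" "Arg (?scale z) = Arg z"
      using that r by (simp_all add: norm_mult norm_divide)
    with circles(1)[OF that] circles(2)
    have "S (sph_angle z) = u" "S (sph_angle (?scale z)) = v" "Arg (?scale z) = Arg z"
      by blast+
    then show ?thesis using mirror unfolding Pmap_def reflXY_def by simp
  qed
  have "reflXY ` Pmap \<alpha> \<beta> S ` {z. cmod z = r1} = (\<lambda>z. Pmap \<alpha> \<beta> S (?scale z)) ` {z. cmod z = r1}"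
    unfolding image_image by (rule image_cong) (simp_all add: reflect)
  also have "\<dots> = Pmap \<alpha> \<beta> S ` {z. cmod z = r2}" unfolding scale[symmetric] image_image ..
  finally show ?thesis ..
qed

theorem proposition1:
  fixes l :: real and \<alpha> \<beta> :: "real \<Rightarrow> real"
    and D\<alpha> D\<beta> :: "nat \<Rightarrow> real \<Rightarrow> real" and S :: "real \<Rightarrow> real" and n :: nat
  assumes l_pos: "0 < l"
    and D\<alpha>0: "D\<alpha> 0 = \<alpha>" and D\<beta>0: "D\<beta> 0 = \<beta>"
    and smooth_\<alpha>: "\<And>k s. s \<in> {0..l} \<Longrightarrow> (D\<alpha> k has_real_derivative D\<alpha> (Suc k) s) (at s within {0..l})"
    and smooth_\<beta>: "\<And>k s. s \<in> {0..l} \<Longrightarrow> (D\<beta> k has_real_derivative D\<beta> (Suc k) s) (at s within {0..l})"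
    and arclength: "\<And>s. s \<in> {0..l} \<Longrightarrow> (D\<alpha> 1 s)\<^sup>2 + (D\<beta> 1 s)\<^sup>2 = 1"
    and \<alpha>_pos: "\<And>s. s \<in> {0<..<l} \<Longrightarrow> 0 < \<alpha> s"
    and \<alpha>_ends: "\<alpha> 0 = 0" "\<alpha> l = 0"
    and \<beta>'_ends: "D\<beta> 1 0 = 0" "D\<beta> 1 l = 0"
    and S_cont: "continuous_on {0..pi} S"
    and S_range: "S ` {0..pi} \<subseteq> {0..l}"
    and S_ode: "\<And>\<phi>. \<phi> \<in> {0<..<pi} \<Longrightarrow>
                  \<exists>D. (S has_real_derivative D) (at \<phi>) \<and> D * sin \<phi> = \<alpha> (S \<phi>)"
    and S_ends: "S 0 = 0" "S pi = l"
    and symmetric: "\<And>x. x \<in> surfM \<alpha> \<beta> l \<Longrightarrow> reflXY x \<in> surfM \<alpha> \<beta> l"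
    and n_pos: "1 \<le> n"
  shows "\<exists>r1 r2 \<omega>0. 0 < r1 \<and> 0 < r2 \<and>
           (\<forall>t. \<forall>i\<in>{1..2*n}. \<forall>j\<in>{1..2*n}. i \<noteq> j \<longrightarrow>
               rot_config n r1 r2 \<omega>0 i t \<noteq> rot_config n r1 r2 \<omega>0 j t) \<and>
           is_pv_solution \<alpha> (D\<alpha> 1) S (2*n) (deg n) (rot_config n r1 r2 \<omega>0) \<and>
           Pmap \<alpha> \<beta> S ` {z. cmod z = r2} = reflXY ` (Pmap \<alpha> \<beta> S ` {z. cmod z = r1})"
proof -
  have "0 \<le> \<alpha> s" if "s \<in> {0..l}" for s using \<alpha>_pos[of s] \<alpha>_ends that by (cases "s = 0 \<or> s = l") auto
  then interpret mirror_symmetric_profile l \<alpha> \<beta> "D\<alpha> 1" "D\<beta> 1"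
    using l_pos smooth_\<alpha>[of _ 0] smooth_\<beta>[of _ 0] DERIV_continuous_on[OF smooth_\<alpha>[of _ 1]]
      arclength \<alpha>_pos \<alpha>_ends \<beta>'_ends surfM_reflection_partner[OF symmetric]
    by unfold_locales (auto simp: D\<alpha>0 D\<beta>0)
  obtain u v where uv: "u \<in> {0<..<l}" "v \<in> {0<..<l}" "u \<noteq> v"
      "\<alpha> v = \<alpha> u" "\<beta> v = - \<beta> u" "D\<alpha> 1 v = - D\<alpha> 1 u"
    by (rule mirror_pair)
  obtain r1 r2 where r: "0 < r1" "0 < r2" "r1 \<noteq> r2"
    and circles: "\<And>z. cmod z = r1 \<Longrightarrow> S (sph_angle z) = u" "\<And>z. cmod z = r2 \<Longrightarrow> S (sph_angle z) = v"
    by (rule circles_over_parallels[OF S_cont S_ends uv(1-3)]) (rule that)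
  obtain \<omega> where "is_pv_solution \<alpha> (D\<alpha> 1) S (2*n) (deg n) (rot_config n r1 r2 \<omega>)"
    using rot_config_is_pv_solution[of n r1 r2 \<alpha> S "\<alpha> u" "D\<alpha> 1" "D\<alpha> 1 u"] n_pos r circles uv
    by auto
  moreover have "\<forall>t. \<forall>i\<in>{1..2*n}. \<forall>j\<in>{1..2*n}. i \<noteq> j \<longrightarrow>
      rot_config n r1 r2 \<omega> i t \<noteq> rot_config n r1 r2 \<omega> j t"
    using rot_config_inj[OF _ r] n_pos by auto
  moreover have "Pmap \<alpha> \<beta> S ` {z. cmod z = r2} = reflXY ` (Pmap \<alpha> \<beta> S ` {z. cmod z = r1})"
    by (rule Pmap_circles_reflect[where S = S, OF r(1,2) circles]) (use uv in simp_all)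
  ultimately show ?thesis using r by blast
qed

end
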